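(* Let $\mathbf A$ be a pseudo-Kleene lattice. Then $\mathbf A$ is super-paraorthomodular if and only if for all $x,y\in A$: $x\leq y$ implies $y\land(x\lor x')=x\lor(x'\land y)$.
   Context: A pseudo-Kleene lattice is an algebra $(A,\land,\lor,{}',0,1)$ that is a bounded lattice with an antitone involution ${}'$ ($x\leq y\Rightarrow y'\leq x'$, $x''=x$) satisfying $x\land x'\leq y\lor y'$. It is super-paraorthomodular if for all $x,y$: (SP1) $x\leq y$ and $x'\land y=(x\land x')\lor(y\land y')$ imply $y\land(x\lor x')=x\lor(y\land y')$; (SP2) $x\leq y$ implies $(x\land x')\lor(y\land y')=(x'\land y)\land(x'\land y)'$. *)

theory Defs
  imports Main
begin

class pseudo_kleene_lattice = bounded_lattice +
  fixes cmpl :: "'a \<Rightarrow> 'a"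
  assumes cmpl_antitone: "x \<le> y \<Longrightarrow> cmpl y \<le> cmpl x"
    and cmpl_involutive: "cmpl (cmpl x) = x"
    and kleene: "inf x (cmpl x) \<le> sup y (cmpl y)"

definition super_paraorthomodular :: "('a::pseudo_kleene_lattice) itself \<Rightarrow> bool" where
  "super_paraorthomodular _ \<longleftrightarrow>
     (\<forall>x y :: 'a.
        x \<le> y \<and> inf (cmpl x) y = sup (inf x (cmpl x)) (inf y (cmpl y))
        \<longrightarrow> inf y (sup x (cmpl x)) = sup x (inf y (cmpl y))) \<and>
     (\<forall>x y :: 'a.
        x \<le> y \<longrightarrow> sup (inf x (cmpl x)) (inf y (cmpl y))
                    = inf (inf (cmpl x) y) (cmpl (inf (cmpl x) y)))"

end

theory Submission
  imports Defs
begin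

text \<open>
  Write \<open>a = x' \<sqinter> y\<close> for \<open>x \<le> y\<close>. The condition
  \<open>y \<sqinter> (x \<squnion> x') = x \<squnion> a\<close> is a modular law for the pair \<open>x \<le> y\<close>; applied also to
  \<open>y' \<le> x'\<close> and to \<open>x \<le> y \<squnion> y'\<close> it computes \<open>a \<squnion> a' = (x \<squnion> x') \<sqinter> (y \<squnion> y')\<close>,
  which is (SP2) after complementation, while (SP1) is immediate. Conversely, given (SP1)
  and (SP2), the elements \<open>p = x \<squnion> a \<le> q = y \<sqinter> (x \<squnion> x')\<close> satisfy the hypothesis of (SP1),
  both sides of it being \<open>a \<sqinter> a'\<close>; its conclusion together with
  \<open>q \<le> p \<squnion> p' = (a \<sqinter> a')'\<close> forces \<open>q = p\<close>.
\<close>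

context pseudo_kleene_lattice
begin

lemma cmpl_le_cmpl_iff: "cmpl x \<le> cmpl y \<longleftrightarrow> y \<le> x"
  by (metis cmpl_antitone cmpl_involutive)

lemma cmpl_sup: "cmpl (sup x y) = inf (cmpl x) (cmpl y)"
proof (rule order.antisym)
  show "cmpl (sup x y) \<le> inf (cmpl x) (cmpl y)"
    by (simp add: cmpl_antitone)
  have "sup x y \<le> cmpl (inf (cmpl x) (cmpl y))"
    by (metis cmpl_le_cmpl_iff cmpl_involutive inf_le1 inf_le2 sup_least)
  then show "inf (cmpl x) (cmpl y) \<le> cmpl (sup x y)"
    by (metis cmpl_le_cmpl_iff cmpl_involutive)
qed

lemma cmpl_inf: "cmpl (inf x y) = sup (cmpl x) (cmpl y)"
  by (metis cmpl_sup cmpl_involutive)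

lemma cmpl_inf_self: "cmpl (inf x (cmpl x)) = sup x (cmpl x)"
  by (simp add: cmpl_inf cmpl_involutive sup_commute)

lemma sp1_if_modular_pair:
  assumes "inf y (sup x (cmpl x)) = sup x (inf (cmpl x) y)"
    and "inf (cmpl x) y = sup (inf x (cmpl x)) (inf y (cmpl y))"
  shows "inf y (sup x (cmpl x)) = sup x (inf y (cmpl y))"
proof -
  have "inf y (sup x (cmpl x)) = sup x (sup (inf x (cmpl x)) (inf y (cmpl y)))"
    using assms by simp
  also have "\<dots> = sup x (inf y (cmpl y))"
    by (simp add: sup_absorb1 sup_assoc[symmetric])
  finally show ?thesis .
qed

lemma sup_cmpl_relative_cmpl:
  assumes modular: "\<And>x y. x \<le> y \<Longrightarrow> inf y (sup x (cmpl x)) = sup x (inf (cmpl x) y)"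
    and "x \<le> y"
  shows "sup (inf (cmpl x) y) (cmpl (inf (cmpl x) y)) = inf (sup x (cmpl x)) (sup y (cmpl y))"
proof -
  have at_cmpl: "inf (cmpl x) (sup (cmpl y) y) = sup (cmpl y) (inf y (cmpl x))"
    using modular[of "cmpl y" "cmpl x"] \<open>x \<le> y\<close> by (simp add: cmpl_antitone cmpl_involutive)
  have at_sup_cmpl: "inf (sup y (cmpl y)) (sup x (cmpl x)) = sup x (inf (cmpl x) (sup y (cmpl y)))"
    using modular[of x "sup y (cmpl y)"] \<open>x \<le> y\<close> by (simp add: le_supI1)
  have "sup (inf (cmpl x) y) (cmpl (inf (cmpl x) y)) = sup x (sup (cmpl y) (inf y (cmpl x)))"
    by (simp add: cmpl_inf cmpl_involutive inf_commute sup_commute sup_left_commute)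
  also have "\<dots> = sup x (inf (cmpl x) (sup y (cmpl y)))"
    using at_cmpl by (simp add: sup_commute)
  also have "\<dots> = inf (sup x (cmpl x)) (sup y (cmpl y))"
    using at_sup_cmpl by (simp add: inf_commute)
  finally show ?thesis .
qed

lemma sp2_if_modular:
  assumes "\<And>x y. x \<le> y \<Longrightarrow> inf y (sup x (cmpl x)) = sup x (inf (cmpl x) y)"
    and "x \<le> y"
  shows "sup (inf x (cmpl x)) (inf y (cmpl y)) = inf (inf (cmpl x) y) (cmpl (inf (cmpl x) y))"
proof -
  have "inf (inf (cmpl x) y) (cmpl (inf (cmpl x) y))
      = cmpl (sup (inf (cmpl x) y) (cmpl (inf (cmpl x) y)))"
    by (simp add: cmpl_sup cmpl_involutive inf_commute)
  also have "\<dots> = cmpl (inf (sup x (cmpl x)) (sup y (cmpl y)))"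
    by (simp only: sup_cmpl_relative_cmpl[OF assms])
  also have "\<dots> = sup (inf x (cmpl x)) (inf y (cmpl y))"
    by (simp add: cmpl_inf cmpl_sup cmpl_involutive inf_commute)
  finally show ?thesis by simp
qed

lemma modular_if_sp:
  assumes sp1: "\<And>x y. x \<le> y \<and> inf (cmpl x) y = sup (inf x (cmpl x)) (inf y (cmpl y))
        \<Longrightarrow> inf y (sup x (cmpl x)) = sup x (inf y (cmpl y))"
    and sp2: "\<And>x y. x \<le> y \<Longrightarrow> sup (inf x (cmpl x)) (inf y (cmpl y))
        = inf (inf (cmpl x) y) (cmpl (inf (cmpl x) y))"
    and "x \<le> y"
  shows "inf y (sup x (cmpl x)) = sup x (inf (cmpl x) y)"
proof -
  define a where "a = inf (cmpl x) y"
  define b where "b = inf a (cmpl a)"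
  define p where "p = sup x a"
  define q where "q = inf y (sup x (cmpl x))"
  have cmpl_a: "cmpl a = sup x (cmpl y)"
    unfolding a_def by (simp add: cmpl_inf cmpl_involutive)
  have cmpl_p: "cmpl p = inf (cmpl x) (cmpl a)"
    unfolding p_def by (simp add: cmpl_sup)
  have cmpl_q: "cmpl q = sup (cmpl y) (inf x (cmpl x))"
    unfolding q_def by (simp add: cmpl_inf cmpl_sup cmpl_involutive inf_commute)
  have "b \<le> a"
    unfolding b_def by simp
  have "p \<le> q"
    unfolding p_def q_def a_def using \<open>x \<le> y\<close> by (simp add: le_infI1 le_supI2)
  have cmpl_p_inf_q: "inf (cmpl p) q = b"
  proof -
    have "inf (cmpl p) q = inf b (sup x (cmpl x))"
      unfolding cmpl_p q_def b_def a_def by (simp add: inf_aci)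
    also have "\<dots> = b"
      using kleene[of a x] unfolding b_def by (simp add: inf_absorb1)
    finally show ?thesis .
  qed
  have p_inf_cmpl_p: "inf p (cmpl p) = b"
  proof -
    have "p \<le> y"
      using \<open>p \<le> q\<close> unfolding q_def by simp
    then have "inf p (cmpl p) = inf (inf p y) (cmpl p)"
      by (simp add: inf_absorb1)
    also have "\<dots> = inf p b"
      unfolding cmpl_p b_def a_def by (simp add: inf_aci)
    also have "\<dots> = b"
      using \<open>b \<le> a\<close> unfolding p_def by (simp add: inf_absorb2 le_supI2)
    finally show ?thesis .
  qed
  have q_inf_cmpl_q: "inf q (cmpl q) \<le> b"
  proof -
    have "cmpl q \<le> cmpl x"
      unfolding cmpl_q using cmpl_antitone[OF \<open>x \<le> y\<close>] by simp
    moreover have "cmpl q \<le> cmpl a"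
      unfolding cmpl_q cmpl_a by (simp add: le_supI1 le_supI2)
    moreover have "q \<le> y"
      unfolding q_def by simp
    ultimately show ?thesis
      unfolding b_def a_def by (meson inf_le1 inf_le2 le_inf_iff order_trans)
  qed
  have "inf q (sup p (cmpl p)) = sup p (inf q (cmpl q))"
    using sp1[of p q] \<open>p \<le> q\<close> cmpl_p_inf_q p_inf_cmpl_p q_inf_cmpl_q by (simp add: sup_absorb1)
  also have "\<dots> = p"
    using q_inf_cmpl_q \<open>b \<le> a\<close> unfolding p_def by (meson order_trans sup.absorb1 sup.coboundedI2)
  finally have q_inf: "inf q (sup p (cmpl p)) = p" .
  have "sup p (cmpl p) = cmpl b"
    using p_inf_cmpl_p by (metis cmpl_inf_self)
  also have "\<dots> = inf (sup x (cmpl x)) (sup y (cmpl y))"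
    unfolding b_def a_def sp2[OF \<open>x \<le> y\<close>, symmetric] by (simp add: cmpl_sup cmpl_inf_self)
  finally have "q \<le> sup p (cmpl p)"
    unfolding q_def by (simp add: le_supI1)
  then have "q = p"
    using q_inf by (simp add: inf_absorb1)
  then show ?thesis
    unfolding q_def p_def a_def .
qed

end

theorem theorem3p4:
  "super_paraorthomodular TYPE('a::pseudo_kleene_lattice) \<longleftrightarrow>
     (\<forall>x y :: 'a. x \<le> y \<longrightarrow> inf y (sup x (cmpl x)) = sup x (inf (cmpl x) y))"
proof
  assume "super_paraorthomodular TYPE('a)"
  then show "\<forall>x y :: 'a. x \<le> y \<longrightarrow> inf y (sup x (cmpl x)) = sup x (inf (cmpl x) y)"
    unfolding super_paraorthomodular_def using modular_if_sp by blast
next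
  assume "\<forall>x y :: 'a. x \<le> y \<longrightarrow> inf y (sup x (cmpl x)) = sup x (inf (cmpl x) y)"
  then show "super_paraorthomodular TYPE('a)"
    unfolding super_paraorthomodular_def using sp1_if_modular_pair sp2_if_modular by blast
qed

end
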